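(* Let $k\ge 2$ and let $u_1,u_2,u_3$ be arbitrary spectral parameters carried by slots $1,2,3$. Then $$\mathcal Q^{(k)}_{1(23)}=\mathcal Q^{(k)}_{12}+\mathcal R^{-1}_{12}\mathcal Q^{(k)}_{13}\mathcal R_{12}+\sum_{n=2}^{k-1}\ \sum_{\substack{\ell_1+\dots+\ell_n=k-1\\ \ell_i\ge 1}}c^{k-1}_{\ell_1,\dots,\ell_n}\Big[\Big[\cdots\Big[\Big[\mathcal R^{-1}_{12}\mathcal Q^{(\bar\ell_n)}_{13}\mathcal R_{12},\mathcal Q^{(\bar\ell_1)}_{12}\Big],\mathcal Q^{(\bar\ell_2)}_{12}\Big],\cdots\Big],\mathcal Q^{(\bar\ell_{n-1})}_{12}\Big]$$ and $$\tilde{\mathcal Q}^{(k)}_{(12)3}=\tilde{\mathcal Q}^{(k)}_{23}+\mathcal R^{-1}_{23}\tilde{\mathcal Q}^{(k)}_{13}\mathcal R_{23}+\sum_{n=2}^{k-1}\ \sum_{\substack{\ell_1+\dots+\ell_n=k-1\\ \ell_i\ge 1}}c^{k-1}_{\ell_1,\dots,\ell_n}\Big[\tilde{\mathcal Q}^{(\bar\ell_{n-1})}_{23},\Big[\tilde{\mathcal Q}^{(\bar\ell_{n-2})}_{23},\Big[\cdots,\Big[\tilde{\mathcal Q}^{(\bar\ell_1)}_{23},\mathcal R^{-1}_{23}\tilde{\mathcal Q}^{(\bar\ell_n)}_{13}\mathcal R_{23}\Big]\cdots\Big]\Big]\Big],$$ where $\bar\ell_i=\ell_i+1$ and $c^{k-1}_{\ell_1,\dots,\ell_n}:=\prod_{m=2}^{n}\binom{\sum_{i=1}^{m}\ell_i-1}{\sum_{i=1}^{m-1}\ell_i}$.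 Here every $\mathcal R_{ij}$, $\mathcal Q_{ij}$, $\tilde{\mathcal Q}_{ij}$ is evaluated at $(u_i,u_j)$.
   Context: Let $V$ be a finite-dimensional complex vector space, $\mathcal P$ the flip $v\otimes w\mapsto w\otimes v$ on $V\otimes V$, and $\mathcal R(u,v)\in\mathrm{End}(V\otimes V)[[u,v]]$ analytic around $0$, satisfying the Yang–Baxter equation $\mathcal R_{12}(u_1,u_2)\mathcal R_{13}(u_1,u_3)\mathcal R_{23}(u_2,u_3)=\mathcal R_{23}(u_2,u_3)\mathcal R_{13}(u_1,u_3)\mathcal R_{12}(u_1,u_2)$, regularity $\mathcal R(u,u)=\mathcal P$ and unitarity $\mathcal R_{12}(u,v)\mathcal R_{21}(v,u)=1$. Subscripts denote the tensor slots of $V^{\otimes n}$ on which a matrix acts; each slot $i$ carries a spectral parameter $u_i$. For ordered lists of distinct slots $I=(i_1,\dots,i_N)$, $J=(j_1,\dots,j_M)$ put $\mathcal R_{IJ}:=\prod_{p=1}^{N}\big(\mathcal R_{i_pj_M}(u_{i_p},u_{j_M})\cdots\mathcal R_{i_pj_1}(u_{i_p},u_{j_1})\big)$, the factors for $p=1,\dots,N$ multiplied from left to right (e.g. $\mathcal R_{1(23)}=\mathcal R_{13}\mathcal R_{12}$, $\mathcal R_{(12)3}=\mathcal R_{13}\mathcal R_{23}$); a list with one slot is written without brackets. Let $D_I:=\sum_{i\in I}\partial/\partial u_i$. For $k\ge 2$ the algebraic charge densities are $\mathcal Q^{(k)}_{IJ}:=D_I^{\,k-2}\big(\mathcal R_{IJ}^{-1}D_I\mathcal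 R_{IJ}\big)$ and $\tilde{\mathcal Q}^{(k)}_{IJ}:=-D_J^{\,k-2}\big(\mathcal R_{IJ}^{-1}D_J\mathcal R_{IJ}\big)$, as functions of the spectral parameters of the slots in $I$ and $J$. *)

theory Defs
  imports "HOL-Analysis.Analysis"
begin

text \<open>V = complex^'d with basis indexed by the finite type 'd.
  Operators on V\<otimes>V are matrices indexed by 'd \<times> 'd; operators on
  V\<otimes>V\<otimes>V are matrices indexed by 'd \<times> 'd \<times> 'd (slots 1,2,3).\<close>

type_synonym 'd op2 = "complex^('d \<times> 'd)^('d \<times> 'd)"
type_synonym 'd op3 = "complex^('d \<times> 'd \<times> 'd)^('d \<times> 'd \<times> 'd)"

definition flipP :: "'d::finite op2" where
  "flipP = (\<chi> x y. if fst x = snd y \<and> snd x = fst y then 1 else 0)"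

text \<open>M_21 := P M P, i.e. M acting with the tensor slots exchanged.\<close>
definition swap21 :: "'d::finite op2 \<Rightarrow> 'd op2" where
  "swap21 M = (\<chi> x y. M $ (snd x, fst x) $ (snd y, fst y))"

definition ix :: "nat \<Rightarrow> ('d::finite \<times> 'd \<times> 'd) \<Rightarrow> 'd" where
  "ix m x = (if m = 1 then fst x else if m = 2 then fst (snd x) else snd (snd x))"

text \<open>Spectral parameters: slot m carries u m.  R_ij(u_i,u_j) acting on slots
  i,j of V\<otimes>V\<otimes>V (identity on the remaining slot).\<close>
definition Rslot :: "(complex \<Rightarrow> complex \<Rightarrow> 'd::finite op2) \<Rightarrow> nat \<Rightarrow> nat \<Rightarrow> (nat \<Rightarrow> complex) \<Rightarrow> 'd op3" where
  "Rslot R i j u = (\<chi> x y. R (u i) (u j) $ (ix i x, ix j x) $ (ix i y, ix j y) *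
      (if (\<forall>m\<in>{1,2,3} - {i,j}. ix m x = ix m y) then 1 else 0))"

text \<open>R_IJ = prod_{p=1..N} (R_{i_p j_M} ... R_{i_p j_1}), left to right.\<close>
definition RIJ :: "(complex \<Rightarrow> complex \<Rightarrow> 'd::finite op2) \<Rightarrow> nat list \<Rightarrow> nat list \<Rightarrow> (nat \<Rightarrow> complex) \<Rightarrow> 'd op3" where
  "RIJ R I J u = foldl (**) (mat 1) (concat (map (\<lambda>p. map (\<lambda>j. Rslot R p j u) (rev J)) I))"

definition mderiv :: "(complex \<Rightarrow> complex^'n::finite^'m::finite) \<Rightarrow> complex \<Rightarrow> complex^'n^'m" where
  "mderiv F t = (\<chi> i j. deriv (\<lambda>s. F s $ i $ j) t)"

text \<open>Shift all spectral parameters of the slots in I by t.  Then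
  (D_I^m f)(u) = (d/dt)^m f(shiftI I u t) at t = 0.\<close>
definition shiftI :: "nat list \<Rightarrow> (nat \<Rightarrow> complex) \<Rightarrow> complex \<Rightarrow> (nat \<Rightarrow> complex)" where
  "shiftI I u t = (\<lambda>i. if i \<in> set I then u i + t else u i)"

definition Qk :: "(complex \<Rightarrow> complex \<Rightarrow> 'd::finite op2) \<Rightarrow> nat \<Rightarrow> nat list \<Rightarrow> nat list \<Rightarrow> (nat \<Rightarrow> complex) \<Rightarrow> 'd op3" where
  "Qk R k I J u =
     (let F = (\<lambda>s. RIJ R I J (shiftI I u s))
      in ((mderiv ^^ (k - 2)) (\<lambda>t. matrix_inv (F t) ** mderiv F t)) 0)"

definition Qtk :: "(complex \<Rightarrow> complex \<Rightarrow> 'd::finite op2) \<Rightarrow> nat \<Rightarrow> nat list \<Rightarrow> nat list \<Rightarrow> (nat \<Rightarrow> complex) \<Rightarrow> 'd op3" where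
  "Qtk R k I J u =
     (let F = (\<lambda>s. RIJ R I J (shiftI J u s))
      in - ((mderiv ^^ (k - 2)) (\<lambda>t. matrix_inv (F t) ** mderiv F t)) 0)"

definition comm :: "'d::finite op3 \<Rightarrow> 'd op3 \<Rightarrow> 'd op3" where
  "comm A B = A ** B - B ** A"

definition compositions :: "nat \<Rightarrow> nat \<Rightarrow> nat list set" where
  "compositions N n = {ls. length ls = n \<and> (\<forall>l\<in>set ls. 1 \<le> l) \<and> sum_list ls = N}"

definition ccoef :: "nat list \<Rightarrow> nat" where
  "ccoef ls = (\<Prod>m=2..length ls. (sum_list (take m ls) - 1) choose (sum_list (take (m - 1) ls)))"

end

theory Submission
  imports Defs "HOL-Complex_Analysis.Cauchy_Integral_Formula"
begin

(* Shifting the parameter of slot 1, the product R_1(23) = R_13 R_12 becomes A(t) B(t) with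
   A = R_13 and B = R_12 (for the tilde charges, shift slot 3 and take A = R_13, B = R_23).
   Its logarithmic derivative is q + B^-1 X B with q = B^-1 B' and X = A^-1 A'. The conjugates
   Y_j = B^-1 X^(j) B satisfy Y_j' = Y_(j+1) + [Y_j, q], so differentiating a nested commutator
   [[Y_(l_n - 1), q^(l_1 - 1)], ...] either raises one of the orders l_i or opens a new commutator
   with q. The resulting recursion on compositions (l_1, ..., l_n) is Pascal's rule for the
   binomial factors of c^(k-1), which therefore are the coefficients of the expansion. *)

section \<open>Holomorphy of double power series\<close>

lemma has_sum_power_series_holomorphic_on:
  fixes h :: "nat \<Rightarrow> nat \<Rightarrow> complex" and F :: "complex \<Rightarrow> complex"
  assumes H: "\<And>a. norm a < r \<Longrightarrow> ((\<lambda>(m,n). h m n * a^m) has_sum F a) UNIV"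
  shows "F holomorphic_on ball 0 r"
proof -
  define g where "g m = infsum (h m) UNIV" for m
  have ser: "(\<lambda>m. g m * a^m) sums F a" if "norm a < r" for a
  proof -
    have sm: "(\<lambda>(m,n). h m n * a^m) summable_on (UNIV \<times> UNIV)"
      using H[OF that] has_sum_imp_summable by (simp add: UNIV_Times_UNIV)
    have inner: "infsum (\<lambda>n. h m n * a^m) UNIV = g m * a^m" for m
      by (simp add: g_def infsum_cmult_left')
    have "infsum (\<lambda>m. infsum (\<lambda>n. h m n * a^m) UNIV) UNIV = F a"
      using infsum_Sigma'_banach[OF sm] infsumI[OF H[OF that]] by (simp add: UNIV_Times_UNIV)
    moreover have "(\<lambda>m. infsum (\<lambda>n. h m n * a^m) UNIV) summable_on UNIV"
      using summable_on_Sigma_banach[OF sm] by simp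
    ultimately have "((\<lambda>m. g m * a^m) has_sum F a) UNIV"
      unfolding inner by (metis has_sum_infsum)
    then show ?thesis by (rule has_sum_imp_sums)
  qed
  have "(\<lambda>z. \<Sum>n. g n * z^n) holomorphic_on ball 0 r"
    unfolding holomorphic_on_open[OF open_ball] field_differentiable_def
    using termdiffs_strong'[of r g] ser sums_summable by (metis dist_0_norm mem_ball)
  moreover have "(\<Sum>n. g n * z^n) = F z" if "z \<in> ball 0 r" for z
    using ser sums_unique that by (metis dist_0_norm mem_ball)
  ultimately show ?thesis by (rule holomorphic_transform)
qed

lemma double_power_series_holomorphic_fst:
  fixes c :: "nat \<Rightarrow> nat \<Rightarrow> complex" and f :: "complex \<Rightarrow> complex \<Rightarrow> complex"
  assumes f: "\<And>a b. norm a < r \<Longrightarrow> norm b < r \<Longrightarrow> ((\<lambda>(m, n). c m n * a ^ m * b ^ n) has_sum f a b) UNIV"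
    and b: "norm b < r"
  shows "(\<lambda>a. f a b) holomorphic_on ball 0 r"
proof (rule has_sum_power_series_holomorphic_on[where h = "\<lambda>m n. c m n * b ^ n"])
  fix a :: complex assume a: "norm a < r"
  show "((\<lambda>(m, n). c m n * b ^ n * a ^ m) has_sum f a b) UNIV"
    using f[OF a b] by (rule has_sum_cong[THEN iffD1, rotated]) (auto simp: mult_ac)
qed

lemma double_power_series_holomorphic_snd:
  fixes c :: "nat \<Rightarrow> nat \<Rightarrow> complex" and f :: "complex \<Rightarrow> complex \<Rightarrow> complex"
  assumes f: "\<And>a b. norm a < r \<Longrightarrow> norm b < r \<Longrightarrow> ((\<lambda>(m, n). c m n * a ^ m * b ^ n) has_sum f a b) UNIV"
    and a: "norm a < r"
  shows "(\<lambda>b. f a b) holomorphic_on ball 0 r"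
proof (rule double_power_series_holomorphic_fst[where c = "\<lambda>m n. c n m" and f = "\<lambda>b a. f a b"])
  fix b a' :: complex assume "norm b < r" "norm a' < r"
  have "bij_betw prod.swap (UNIV :: (nat \<times> nat) set) UNIV"
    by (simp add: bij_betwI')
  then have "((\<lambda>x. (\<lambda>(m, n). c m n * a' ^ m * b ^ n) (prod.swap x)) has_sum f a' b) UNIV"
    using has_sum_reindex_bij_betw f \<open>norm b < r\<close> \<open>norm a' < r\<close> by blast
  then show "((\<lambda>(m, n). c n m * b ^ m * a' ^ n) has_sum f a' b) UNIV"
    by (simp add: case_prod_beta' mult_ac)
qed (rule a)


section \<open>Embedding two-slot operators into three slots\<close>

lemma Rslot_cong:
  "R (w i) (w j) = R' (w i) (w j) \<Longrightarrow> Rslot R i j w = Rslot R' i j w"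
  unfolding Rslot_def by simp

lemma Rslot_mat_1:
  assumes "i \<in> {1,2,3}" "j \<in> {1,2,3}" "i \<noteq> j"
  shows "Rslot (\<lambda>a b. mat 1) i j w = (mat 1 :: 'd::finite op3)"
  using assms unfolding Rslot_def ix_def mat_def
  by (auto simp: vec_eq_iff insert_Diff_if)

lemma sum_UNIV_pair:
  "(\<Sum>z\<in>UNIV. f z) = (\<Sum>a\<in>(UNIV::'a::finite set). \<Sum>b\<in>(UNIV::'b::finite set). f (a, b))"
  by (simp add: sum.cartesian_product UNIV_Times_UNIV[symmetric] del: UNIV_Times_UNIV)

lemma sum_if_const_cond: "(\<Sum>x\<in>A. if P then f x else 0) = (if P then sum f A else 0)"
  by simp

lemma Rslot_mult:
  fixes M N :: "complex \<Rightarrow> complex \<Rightarrow> 'd::finite op2"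
  assumes "(i, j) \<in> {(1,2), (1,3), (2,3)}"
  shows "Rslot M i j w ** Rslot N i j w = Rslot (\<lambda>a b. M a b ** N a b) i j w"
  using assms
  by (auto simp: vec_eq_iff matrix_matrix_mult_def Rslot_def ix_def sum_UNIV_pair sum_if_const_cond
      insert_Diff_if if_distrib[of "\<lambda>x. _ * x"] sum.delta sum.delta' sum_distrib_right cong: if_cong)

lemma matrix_add_rdistrib: "((A::'a::semiring_1^'k^'m) + B) ** (C::'a^'n^'k) = A ** C + B ** C"
  by (simp add: vec_eq_iff matrix_matrix_mult_def sum.distrib distrib_right)

lemma matrix_diff_rdistrib: "((A::'a::ring_1^'k^'m) - B) ** (C::'a^'n^'k) = A ** C - B ** C"
  by (simp add: vec_eq_iff matrix_matrix_mult_def sum_subtractf left_diff_distrib)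

lemma matrix_neg_left: "(- (A::'a::ring_1^'k^'m)) ** (C::'a^'n^'k) = - (A ** C)"
  by (simp add: vec_eq_iff matrix_matrix_mult_def sum_negf)

lemma matrix_neg_right: "(C::'a::ring_1^'k^'m) ** (- (A::'a^'n^'k)) = - (C ** A)"
  by (simp add: vec_eq_iff matrix_matrix_mult_def sum_negf)

lemma matrix_inv_left: "invertible A \<Longrightarrow> matrix_inv A ** A = mat 1"
  unfolding invertible_def matrix_inv_def by (rule someI2_ex) auto

lemma matrix_inv_right: "invertible A \<Longrightarrow> A ** matrix_inv A = mat 1"
  unfolding invertible_def matrix_inv_def by (rule someI2_ex) auto

lemma invertible_if_right_inverse:
  fixes A B :: "'a::field^'n^'n"
  shows "A ** B = mat 1 \<Longrightarrow> invertible A"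
  unfolding invertible_def using matrix_left_right_inverse by blast

lemma matrix_inv_eq_right_inverse:
  fixes A B :: "'a::field^'n^'n"
  assumes AB: "A ** B = mat 1"
  shows "matrix_inv A = B"
proof -
  have "matrix_inv A = matrix_inv A ** (A ** B)"
    using AB by simp
  also have "\<dots> = B"
    using matrix_inv_left[OF invertible_if_right_inverse[OF AB]] by (simp add: matrix_mul_assoc)
  finally show ?thesis .
qed

lemma matrix_inv_mult:
  fixes A B :: "'a::field^'n^'n"
  assumes "invertible A" "invertible B"
  shows "matrix_inv (A ** B) = matrix_inv B ** matrix_inv A"
proof (rule matrix_inv_eq_right_inverse)
  have "A ** B ** matrix_inv B ** matrix_inv A = A ** (B ** matrix_inv B) ** matrix_inv A"
    by (simp add: matrix_mul_assoc)
  then show "A ** B ** (matrix_inv B ** matrix_inv A) = mat 1"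
    using assms by (simp add: matrix_mul_assoc matrix_inv_right)
qed

lemma comm_add_left: "comm (X + Y) Q = comm X Q + comm Y Q"
  unfolding comm_def by (simp add: matrix_add_rdistrib matrix_add_ldistrib)

lemma comm_zero_left: "comm 0 Q = 0"
  unfolding comm_def by simp

lemma comm_sum_left: "comm (\<Sum>a\<in>I. F a) Q = (\<Sum>a\<in>I. comm (F a) Q)"
  by (induction I rule: infinite_finite_induct) (simp_all add: comm_add_left comm_zero_left)

lemma comm_neg_neg: "comm (- Q) (- X) = - comm X Q"
  unfolding comm_def by (simp add: matrix_neg_left matrix_neg_right)

section \<open>Matrix-valued holomorphic functions\<close>

definition mat_holomorphic_on :: "(complex \<Rightarrow> complex^'n::finite^'m::finite) \<Rightarrow> complex set \<Rightarrow> bool"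
    (infixl \<open>mat'_holomorphic'_on\<close> 50) where
  "F mat_holomorphic_on S \<longleftrightarrow> (\<forall>i j. (\<lambda>t. F t $ i $ j) holomorphic_on S)"

lemma mat_holomorphic_on_field_differentiable:
  "F mat_holomorphic_on S \<Longrightarrow> open S \<Longrightarrow> t \<in> S \<Longrightarrow> (\<lambda>t. F t $ i $ j) field_differentiable (at t)"
  unfolding mat_holomorphic_on_def using holomorphic_on_imp_differentiable_at by blast

lemma mat_holomorphic_on_mderiv: "open S \<Longrightarrow> F mat_holomorphic_on S \<Longrightarrow> mderiv F mat_holomorphic_on S"
  unfolding mat_holomorphic_on_def mderiv_def by (simp add: holomorphic_deriv)

lemma mat_holomorphic_on_funpow_mderiv:
  "open S \<Longrightarrow> F mat_holomorphic_on S \<Longrightarrow> (mderiv ^^ n) F mat_holomorphic_on S"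
  by (induction n) (auto intro: mat_holomorphic_on_mderiv)

lemma mat_holomorphic_on_diff:
  "F mat_holomorphic_on S \<Longrightarrow> G mat_holomorphic_on S \<Longrightarrow> (\<lambda>t. F t - G t) mat_holomorphic_on S"
  unfolding mat_holomorphic_on_def by (auto intro: holomorphic_intros)

lemma mat_holomorphic_on_scaleR:
  "F mat_holomorphic_on S \<Longrightarrow> (\<lambda>t. c *\<^sub>R F t) mat_holomorphic_on S"
  unfolding mat_holomorphic_on_def by (auto simp: scaleR_conv_of_real intro: holomorphic_intros)

lemma mat_holomorphic_on_mult:
  "F mat_holomorphic_on S \<Longrightarrow> G mat_holomorphic_on S \<Longrightarrow> (\<lambda>t. F t ** G t) mat_holomorphic_on S"
  unfolding mat_holomorphic_on_def matrix_matrix_mult_def by (auto intro!: holomorphic_intros)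

lemma mat_holomorphic_on_sum:
  "(\<And>a. a \<in> A \<Longrightarrow> F a mat_holomorphic_on S) \<Longrightarrow> (\<lambda>t. \<Sum>a\<in>A. F a t) mat_holomorphic_on S"
  unfolding mat_holomorphic_on_def by (auto simp: sum_component intro!: holomorphic_intros)

lemma mat_holomorphic_on_comm:
  "F mat_holomorphic_on S \<Longrightarrow> G mat_holomorphic_on S \<Longrightarrow> (\<lambda>t. comm (F t) (G t)) mat_holomorphic_on S"
  unfolding comm_def by (intro mat_holomorphic_on_diff mat_holomorphic_on_mult)

lemma mat_holomorphic_on_cong:
  "(\<And>t. t \<in> S \<Longrightarrow> F t = G t) \<Longrightarrow> F mat_holomorphic_on S \<longleftrightarrow> G mat_holomorphic_on S"
  unfolding mat_holomorphic_on_def by (auto cong: holomorphic_cong)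

lemma mderiv_cong:
  "open S \<Longrightarrow> (\<And>t. t \<in> S \<Longrightarrow> F t = G t) \<Longrightarrow> t \<in> S \<Longrightarrow> mderiv F t = mderiv G t"
  unfolding mderiv_def
  by (auto simp: vec_eq_iff intro!: deriv_cong_ev eventually_nhds_in_open[THEN eventually_mono])

lemma funpow_mderiv_cong:
  "open S \<Longrightarrow> (\<And>t. t \<in> S \<Longrightarrow> F t = G t) \<Longrightarrow> t \<in> S \<Longrightarrow> (mderiv ^^ n) F t = (mderiv ^^ n) G t"
proof (induction n arbitrary: t)
  case (Suc n)
  then show ?case by (simp add: mderiv_cong[of S "(mderiv ^^ n) F" "(mderiv ^^ n) G"])
qed simp

lemma mderiv_const: "mderiv (\<lambda>t. M) t = 0"
  unfolding mderiv_def by (simp add: vec_eq_iff)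

lemma mderiv_add:
  "open S \<Longrightarrow> F mat_holomorphic_on S \<Longrightarrow> G mat_holomorphic_on S \<Longrightarrow> t \<in> S \<Longrightarrow>
   mderiv (\<lambda>t. F t + G t) t = mderiv F t + mderiv G t"
  unfolding mderiv_def by (simp add: vec_eq_iff mat_holomorphic_on_field_differentiable)

lemma mderiv_diff:
  "open S \<Longrightarrow> F mat_holomorphic_on S \<Longrightarrow> G mat_holomorphic_on S \<Longrightarrow> t \<in> S \<Longrightarrow>
   mderiv (\<lambda>t. F t - G t) t = mderiv F t - mderiv G t"
  unfolding mderiv_def by (simp add: vec_eq_iff mat_holomorphic_on_field_differentiable)

lemma mderiv_scaleR:
  "open S \<Longrightarrow> F mat_holomorphic_on S \<Longrightarrow> t \<in> S \<Longrightarrow> mderiv (\<lambda>t. c *\<^sub>R F t) t = c *\<^sub>R mderiv F t"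
  unfolding mderiv_def
  by (simp add: vec_eq_iff mat_holomorphic_on_field_differentiable scaleR_conv_of_real deriv_cmult)

lemma mderiv_mult:
  "open S \<Longrightarrow> F mat_holomorphic_on S \<Longrightarrow> G mat_holomorphic_on S \<Longrightarrow> t \<in> S \<Longrightarrow>
   mderiv (\<lambda>t. F t ** G t) t = mderiv F t ** G t + F t ** mderiv G t"
  unfolding mderiv_def matrix_matrix_mult_def
  by (simp add: vec_eq_iff mat_holomorphic_on_field_differentiable field_differentiable_mult
      deriv_sum sum.distrib[symmetric] algebra_simps)

lemma mderiv_sum:
  "open S \<Longrightarrow> (\<And>a. a \<in> A \<Longrightarrow> F a mat_holomorphic_on S) \<Longrightarrow> t \<in> S \<Longrightarrow>
   mderiv (\<lambda>t. \<Sum>a\<in>A. F a t) t = (\<Sum>a\<in>A. mderiv (F a) t)"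
proof (induction A rule: infinite_finite_induct)
  case (insert x F')
  then show ?case by (simp add: mderiv_add mat_holomorphic_on_sum)
qed (simp_all add: mderiv_const)

lemma mderiv_comm:
  "open S \<Longrightarrow> F mat_holomorphic_on S \<Longrightarrow> G mat_holomorphic_on S \<Longrightarrow> t \<in> S \<Longrightarrow>
   mderiv (\<lambda>t. comm (F t) (G t)) t = comm (mderiv F t) (G t) + comm (F t) (mderiv G t)"
  unfolding comm_def by (simp add: mderiv_diff mat_holomorphic_on_mult mderiv_mult)

lemma funpow_mderiv_add:
  "open S \<Longrightarrow> F mat_holomorphic_on S \<Longrightarrow> G mat_holomorphic_on S \<Longrightarrow> t \<in> S \<Longrightarrow>
   (mderiv ^^ m) (\<lambda>t. F t + G t) t = (mderiv ^^ m) F t + (mderiv ^^ m) G t"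
proof (induction m arbitrary: t)
  case (Suc m)
  have "(mderiv ^^ Suc m) (\<lambda>t. F t + G t) t = mderiv (\<lambda>t. (mderiv ^^ m) F t + (mderiv ^^ m) G t) t"
    using Suc by (simp add: mderiv_cong[of S "(mderiv ^^ m) (\<lambda>t. F t + G t)"])
  also have "\<dots> = (mderiv ^^ Suc m) F t + (mderiv ^^ Suc m) G t"
    using Suc by (simp add: mderiv_add mat_holomorphic_on_funpow_mderiv)
  finally show ?case .
qed simp

section \<open>Coefficients of compositions\<close>

fun ccoef_from :: "nat \<Rightarrow> nat list \<Rightarrow> nat" where
  "ccoef_from a [] = 1"
| "ccoef_from a (l # ls) = ((a + l - 1) choose a) * ccoef_from (a + l) ls"

lemma ccoef_from_eq_prod:
  "ccoef_from a ls =
     (\<Prod>m=1..length ls. (a + sum_list (take m ls) - 1) choose (a + sum_list (take (m - 1) ls)))"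
proof (induction ls arbitrary: a)
  case (Cons l ls)
  have "(\<Prod>m=1..length (l # ls). (a + sum_list (take m (l # ls)) - 1) choose (a + sum_list (take (m - 1) (l # ls))))
      = ((a + l - 1) choose a) *
        (\<Prod>m=1..length ls. (a + sum_list (take (Suc m) (l # ls)) - 1) choose (a + sum_list (take m (l # ls))))"
    by (simp add: prod.atLeast_Suc_atMost prod.shift_bounds_cl_Suc_ivl del: prod.cl_ivl_Suc)
  also have "(\<Prod>m=1..length ls. (a + sum_list (take (Suc m) (l # ls)) - 1) choose (a + sum_list (take m (l # ls))))
      = (\<Prod>m=1..length ls. (a + l + sum_list (take m ls) - 1) choose (a + l + sum_list (take (m - 1) ls)))"
    by (rule prod.cong) (auto simp: take_Cons' add.assoc)
  finally show ?case
    using Cons.IH[of "a + l"] by simp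
qed simp

lemma ccoef_eq_ccoef_from: "ccoef ls = ccoef_from 0 ls"
proof (cases ls)
  case (Cons l ls')
  have "ccoef (l # ls') = ccoef_from l ls'"
    unfolding ccoef_def ccoef_from_eq_prod
    by (simp add: prod.atLeast_Suc_atMost_Suc_shift numeral_2_eq_2 del: prod.cl_ivl_Suc)
      (rule prod.cong; auto simp: take_Cons')
  then show ?thesis using Cons by simp
qed (simp add: ccoef_def)

definition lowered_ccoef_sum :: "nat \<Rightarrow> nat list \<Rightarrow> nat" where
  "lowered_ccoef_sum a ls =
     (\<Sum>i<length ls. if 2 \<le> ls ! i then ccoef_from a (ls[i := ls ! i - 1]) else 0)"

lemma lowered_ccoef_sum_Nil: "lowered_ccoef_sum a [] = 0"
  by (simp add: lowered_ccoef_sum_def)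

lemma lowered_ccoef_sum_Cons:
  "lowered_ccoef_sum a (l # ls) =
     (if 2 \<le> l then ccoef_from a ((l - 1) # ls) else 0)
     + ((a + l - 1) choose a) * lowered_ccoef_sum (a + l) ls"
  unfolding lowered_ccoef_sum_def
  by (auto simp add: sum.lessThan_Suc_shift sum_distrib_left simp del: sum.lessThan_Suc
      intro!: sum.cong)

lemma lowered_ccoef_sum_pascal:
  "\<forall>l\<in>set ls. 1 \<le> l \<Longrightarrow> lowered_ccoef_sum (Suc c) ls + ccoef_from c ls = ccoef_from (Suc c) ls"
proof (induction ls arbitrary: c)
  case (Cons l ls)
  then obtain j where l: "l = Suc j" by (cases l) auto
  have IH: "lowered_ccoef_sum (Suc (c + l)) ls + ccoef_from (c + l) ls = ccoef_from (Suc (c + l)) ls"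
    using Cons by simp
  \<comment> \<open>for \<open>l = 1\<close> both sides vanish, since \<open>c choose Suc c = 0\<close>\<close>
  have head: "(if 2 \<le> l then ccoef_from (Suc c) ((l - 1) # ls) else 0)
      = ((c + j) choose Suc c) * ccoef_from (c + l) ls"
    using l by (cases j) auto
  have "lowered_ccoef_sum (Suc c) (l # ls) + ccoef_from c (l # ls)
      = (((c + j) choose Suc c) + ((c + j) choose c)) * ccoef_from (c + l) ls
        + (Suc (c + j) choose Suc c) * lowered_ccoef_sum (Suc (c + l)) ls"
    unfolding lowered_ccoef_sum_Cons head using l by (simp add: algebra_simps)
  also have "\<dots> = (Suc (c + j) choose Suc c) * ccoef_from (Suc (c + l)) ls"
    unfolding IH[symmetric] by (simp add: algebra_simps)
  also have "\<dots> = ccoef_from (Suc c) (l # ls)"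
    using l by simp
  finally show ?case .
qed (simp add: lowered_ccoef_sum_Nil)

lemma ccoef_from_0_pascal:
  assumes "\<forall>l\<in>set ls. 1 \<le> l" and "ls \<noteq> []"
  shows "lowered_ccoef_sum 0 ls + (if hd ls = 1 then ccoef_from 0 (tl ls) else 0) = ccoef_from 0 ls"
proof -
  obtain l0 ls' where ls0: "ls = l0 # ls'"
    using assms(2) by (cases ls) auto
  with assms(1) obtain l where ls: "ls = Suc l # ls'"
    by (cases l0) auto
  have "lowered_ccoef_sum (Suc l) ls' + ccoef_from l ls' = ccoef_from (Suc l) ls'"
    using assms ls by (intro lowered_ccoef_sum_pascal) auto
  then show ?thesis
    using ls by (cases l) (auto simp: lowered_ccoef_sum_Cons)
qed

definition all_compositions :: "nat \<Rightarrow> nat list set" where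
  "all_compositions N = {ls. (\<forall>l\<in>set ls. 1 \<le> l) \<and> sum_list ls = N}"

lemma length_le_sum_list: "\<forall>l\<in>set ls. 1 \<le> l \<Longrightarrow> length ls \<le> sum_list ls"
  by (induction ls) auto

lemma finite_all_compositions: "finite (all_compositions N)"
proof (rule finite_subset)
  show "all_compositions N \<subseteq> {ls. set ls \<subseteq> {0..N} \<and> length ls \<le> N}"
    unfolding all_compositions_def using length_le_sum_list member_le_sum_list by fastforce
  show "finite {ls. set ls \<subseteq> {0..N} \<and> length ls \<le> N}"
    by (rule finite_lists_length_le) simp
qed

lemma finite_compositions: "finite (compositions N n)"
  by (rule finite_subset[OF _ finite_all_compositions[of N]])
    (auto simp: all_compositions_def compositions_def)

lemma all_compositions_1: "all_compositions 1 = {[1]}"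
proof -
  have "ls = [1]" if "ls \<in> all_compositions 1" for ls
  proof -
    from that have "length ls \<le> 1" "ls \<noteq> []" "sum_list ls = 1"
      using length_le_sum_list unfolding all_compositions_def by fastforce+
    then show ?thesis by (cases ls) auto
  qed
  then show ?thesis by (auto simp: all_compositions_def)
qed

lemma all_compositions_eq_UN:
  assumes "1 \<le> N"
  shows "all_compositions N = (\<Union>n\<in>{1..N}. compositions N n)"
proof (intro equalityI subsetI)
  fix ls assume ls: "ls \<in> all_compositions N"
  then have "length ls \<le> N" "ls \<noteq> []"
    using length_le_sum_list assms by (auto simp: all_compositions_def)
  with ls show "ls \<in> (\<Union>n\<in>{1..N}. compositions N n)"
    by (auto simp: all_compositions_def compositions_def Suc_le_eq)
qed (auto simp: all_compositions_def compositions_def)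

lemma compositions_1: "1 \<le> N \<Longrightarrow> compositions N 1 = {[N]}"
  unfolding compositions_def by (auto simp: length_Suc_conv)

lemma list_update_in_all_compositions:
  assumes "ls \<in> all_compositions N" "i < length ls" "1 \<le> x" "N + x = M + ls ! i"
  shows "ls[i := x] \<in> all_compositions M"
  using assms set_update_subset_insert[of ls i x] elem_le_sum_list[of i ls]
  by (auto simp: all_compositions_def sum_list_update)

lemma sum_raise_part:
  fixes f :: "nat list \<Rightarrow> nat list \<Rightarrow> 'v::comm_monoid_add"
  shows "(\<Sum>(ls, i)\<in>Sigma (all_compositions (Suc N)) (\<lambda>ls. {i. i < length ls \<and> 2 \<le> ls ! i}).
            f (ls[i := ls ! i - 1]) ls)
       = (\<Sum>(ls, i)\<in>Sigma (all_compositions N) (\<lambda>ls. {..<length ls}). f ls (ls[i := ls ! i + 1]))"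
proof -
  define raise :: "nat list \<times> nat \<Rightarrow> nat list \<times> nat" where "raise = (\<lambda>(ls, i). (ls[i := ls ! i + 1], i))"
  define lower :: "nat list \<times> nat \<Rightarrow> nat list \<times> nat" where "lower = (\<lambda>(ls, i). (ls[i := ls ! i - 1], i))"
  show ?thesis
  proof (rule sum.reindex_bij_witness[of _ raise lower])
    fix a assume "a \<in> Sigma (all_compositions (Suc N)) (\<lambda>ls. {i. i < length ls \<and> 2 \<le> ls ! i})"
    then obtain ls i where a: "a = (ls, i)" "ls \<in> all_compositions (Suc N)" "i < length ls" "2 \<le> ls ! i"
      by auto
    moreover from a have "ls[i := ls ! i - 1] \<in> all_compositions N"
      by (intro list_update_in_all_compositions) auto
    ultimately show "lower a \<in> Sigma (all_compositions N) (\<lambda>ls. {..<length ls})" "raise (lower a) = a"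
      "(case lower a of (ls, i) \<Rightarrow> f ls (ls[i := ls ! i + 1])) = (case a of (ls, i) \<Rightarrow> f (ls[i := ls ! i - 1]) ls)"
      by (simp_all add: raise_def lower_def)
  next
    fix b assume "b \<in> Sigma (all_compositions N) (\<lambda>ls. {..<length ls})"
    then obtain ls i where b: "b = (ls, i)" "ls \<in> all_compositions N" "i < length ls"
      by auto
    moreover from b have "1 \<le> ls ! i"
      by (auto simp: all_compositions_def)
    moreover from b have "ls[i := ls ! i + 1] \<in> all_compositions (Suc N)"
      by (intro list_update_in_all_compositions) auto
    ultimately show "raise b \<in> Sigma (all_compositions (Suc N)) (\<lambda>ls. {i. i < length ls \<and> 2 \<le> ls ! i})"
      "lower (raise b) = b"
      by (simp_all add: raise_def lower_def)
  qed
qed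

lemma sum_lowered_ccoef_sum:
  fixes W :: "nat list \<Rightarrow> 'v::real_vector"
  shows "(\<Sum>ls\<in>all_compositions (Suc N). real (lowered_ccoef_sum 0 ls) *\<^sub>R W ls)
       = (\<Sum>ls\<in>all_compositions N. \<Sum>i<length ls. real (ccoef_from 0 ls) *\<^sub>R W (ls[i := ls ! i + 1]))"
proof -
  have "(\<Sum>ls\<in>all_compositions (Suc N). real (lowered_ccoef_sum 0 ls) *\<^sub>R W ls)
      = (\<Sum>(ls, i)\<in>Sigma (all_compositions (Suc N)) (\<lambda>ls. {i. i < length ls \<and> 2 \<le> ls ! i}).
           real (ccoef_from 0 (ls[i := ls ! i - 1])) *\<^sub>R W ls)"
    unfolding lowered_ccoef_sum_def
    by (simp add: sum.Sigma finite_all_compositions scaleR_sum_left if_distrib[of real]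
        if_distrib[of "\<lambda>x. x *\<^sub>R _"] sum.If_cases lessThan_def Collect_conj_eq Int_commute cong: if_cong)
  also have "\<dots> = (\<Sum>(ls, i)\<in>Sigma (all_compositions N) (\<lambda>ls. {..<length ls}).
                    real (ccoef_from 0 ls) *\<^sub>R W (ls[i := ls ! i + 1]))"
    by (rule sum_raise_part)
  also have "\<dots> = (\<Sum>ls\<in>all_compositions N. \<Sum>i<length ls. real (ccoef_from 0 ls) *\<^sub>R W (ls[i := ls ! i + 1]))"
    by (simp add: sum.Sigma finite_all_compositions)
  finally show ?thesis .
qed

lemma sum_head_one:
  fixes W :: "nat list \<Rightarrow> 'v::real_vector"
  shows "(\<Sum>ls\<in>all_compositions (Suc N). if hd ls = 1 then real (ccoef_from 0 (tl ls)) *\<^sub>R W ls else 0)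
       = (\<Sum>ls\<in>all_compositions N. real (ccoef_from 0 ls) *\<^sub>R W (1 # ls))"
proof -
  have "(\<Sum>ls\<in>all_compositions (Suc N). if hd ls = 1 then real (ccoef_from 0 (tl ls)) *\<^sub>R W ls else 0)
      = (\<Sum>ls\<in>{ls \<in> all_compositions (Suc N). hd ls = 1}. real (ccoef_from 0 (tl ls)) *\<^sub>R W ls)"
    by (simp add: sum.inter_filter finite_all_compositions)
  also have "\<dots> = (\<Sum>ls\<in>all_compositions N. real (ccoef_from 0 ls) *\<^sub>R W (1 # ls))"
  proof (rule sum.reindex_bij_witness[of _ "Cons 1" tl])
    fix ls assume "ls \<in> {ls \<in> all_compositions (Suc N). hd ls = 1}"
    then obtain ls' where ls: "ls = 1 # ls'" "ls \<in> all_compositions (Suc N)"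
      by (cases ls) (auto simp: all_compositions_def)
    then show "1 # tl ls = ls" "tl ls \<in> all_compositions N"
      "real (ccoef_from 0 (tl ls)) *\<^sub>R W (1 # tl ls) = real (ccoef_from 0 (tl ls)) *\<^sub>R W ls"
      by (auto simp: all_compositions_def)
  qed (auto simp: all_compositions_def)
  finally show ?thesis .
qed

lemma ccoef_sum_step:
  fixes W :: "nat list \<Rightarrow> 'v::real_vector"
  shows "(\<Sum>ls\<in>all_compositions N. real (ccoef ls) *\<^sub>R ((\<Sum>i<length ls. W (ls[i := ls ! i + 1])) + W (1 # ls)))
       = (\<Sum>ls\<in>all_compositions (Suc N). real (ccoef ls) *\<^sub>R W ls)"
proof -
  have split: "real (ccoef ls) *\<^sub>R W ls = real (lowered_ccoef_sum 0 ls) *\<^sub>R W ls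
          + (if hd ls = 1 then real (ccoef_from 0 (tl ls)) *\<^sub>R W ls else 0)"
    if "ls \<in> all_compositions (Suc N)" for ls
  proof -
    from that have "ls \<noteq> []" "\<forall>l\<in>set ls. 1 \<le> l"
      by (auto simp: all_compositions_def)
    then have "ccoef ls = lowered_ccoef_sum 0 ls + (if hd ls = 1 then ccoef_from 0 (tl ls) else 0)"
      using ccoef_from_0_pascal[of ls] by (simp add: ccoef_eq_ccoef_from)
    then show ?thesis
      by (cases "hd ls = 1") (simp_all add: scaleR_add_left)
  qed
  have "(\<Sum>ls\<in>all_compositions (Suc N). real (ccoef ls) *\<^sub>R W ls)
      = (\<Sum>ls\<in>all_compositions (Suc N). real (lowered_ccoef_sum 0 ls) *\<^sub>R W ls)
        + (\<Sum>ls\<in>all_compositions (Suc N). if hd ls = 1 then real (ccoef_from 0 (tl ls)) *\<^sub>R W ls else 0)"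
    unfolding sum.distrib[symmetric] by (rule sum.cong[OF refl split])
  also have "\<dots> = (\<Sum>ls\<in>all_compositions N. real (ccoef ls) *\<^sub>R ((\<Sum>i<length ls. W (ls[i := ls ! i + 1])) + W (1 # ls)))"
    unfolding sum_lowered_ccoef_sum sum_head_one
    by (simp add: sum.distrib ccoef_eq_ccoef_from scaleR_add_right scaleR_sum_right)
  finally show ?thesis ..
qed

section \<open>Higher derivatives of a logarithmic derivative\<close>

definition mat_logderiv :: "(complex \<Rightarrow> complex^'n::finite^'n) \<Rightarrow> complex \<Rightarrow> complex^'n^'n" where
  "mat_logderiv F t = matrix_inv (F t) ** mderiv F t"

lemma mat_logderiv_holomorphic:
  "open S \<Longrightarrow> F mat_holomorphic_on S \<Longrightarrow> (\<lambda>t. matrix_inv (F t)) mat_holomorphic_on S \<Longrightarrow>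
   mat_logderiv F mat_holomorphic_on S"
  unfolding mat_logderiv_def[abs_def] by (intro mat_holomorphic_on_mult mat_holomorphic_on_mderiv)

lemma mderiv_matrix_inv:
  assumes S: "open S" "t \<in> S" and F: "F mat_holomorphic_on S" "(\<lambda>t. matrix_inv (F t)) mat_holomorphic_on S"
    and inv: "\<And>t. t \<in> S \<Longrightarrow> invertible (F t)"
  shows "mderiv (\<lambda>t. matrix_inv (F t)) t = - (matrix_inv (F t) ** mderiv F t ** matrix_inv (F t))"
proof -
  have "mderiv (\<lambda>t. matrix_inv (F t) ** F t) t = mderiv (\<lambda>t. mat 1) t"
    by (rule mderiv_cong[OF S(1) _ S(2)]) (simp add: inv matrix_inv_left)
  then have "mderiv (\<lambda>t. matrix_inv (F t)) t ** F t = - (matrix_inv (F t) ** mderiv F t)"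
    by (simp add: mderiv_mult[OF S(1) F(2) F(1) S(2)] mderiv_const eq_neg_iff_add_eq_0)
  then have "mderiv (\<lambda>t. matrix_inv (F t)) t ** F t ** matrix_inv (F t)
      = - (matrix_inv (F t) ** mderiv F t) ** matrix_inv (F t)"
    by simp
  then show ?thesis
    by (simp add: matrix_mul_assoc[symmetric] matrix_inv_right inv S(2) matrix_neg_left)
qed

lemma mat_logderiv_mult:
  assumes S: "open S" "t \<in> S" and hol: "A mat_holomorphic_on S" "B mat_holomorphic_on S"
    and inv: "invertible (A t)" "invertible (B t)"
  shows "mat_logderiv (\<lambda>t. A t ** B t) t = mat_logderiv B t + matrix_inv (B t) ** mat_logderiv A t ** B t"
proof -
  have "matrix_inv (B t) ** matrix_inv (A t) ** A t ** mderiv B t = matrix_inv (B t) ** mderiv B t"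
    by (simp add: matrix_mul_assoc[symmetric] inv matrix_inv_left)
  then show ?thesis
    unfolding mat_logderiv_def
    by (simp add: mderiv_mult[OF S(1) hol S(2)] matrix_inv_mult inv matrix_add_ldistrib
        matrix_mul_assoc add.commute)
qed

definition nested_comm ::
    "(complex \<Rightarrow> 'd::finite op3) \<Rightarrow> (complex \<Rightarrow> 'd op3) \<Rightarrow> nat list \<Rightarrow> complex \<Rightarrow> 'd op3" where
  "nested_comm q Z ls t = foldl (\<lambda>Y l. comm Y ((mderiv ^^ (l - 1)) q t)) (Z t) ls"

lemma nested_comm_Nil: "nested_comm q Z [] = Z"
  by (simp add: nested_comm_def fun_eq_iff)

lemma nested_comm_snoc:
  "nested_comm q Z (ls @ [l]) = (\<lambda>t. comm (nested_comm q Z ls t) ((mderiv ^^ (l - 1)) q t))"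
  by (simp add: nested_comm_def fun_eq_iff)

lemma nested_comm_Cons:
  "nested_comm q Z (l # ls) = nested_comm q (\<lambda>t. comm (Z t) ((mderiv ^^ (l - 1)) q t)) ls"
  by (simp add: nested_comm_def fun_eq_iff)

lemma nested_comm_add:
  "nested_comm q (\<lambda>t. Z t + Z' t) ls t = nested_comm q Z ls t + nested_comm q Z' ls t"
  by (induction ls rule: rev_induct) (simp_all add: nested_comm_Nil nested_comm_snoc comm_add_left)

lemma nested_comm_holomorphic:
  assumes "open S" "q mat_holomorphic_on S" "Z mat_holomorphic_on S"
  shows "nested_comm q Z ls mat_holomorphic_on S"
  by (induction ls rule: rev_induct)
    (simp_all add: assms nested_comm_Nil nested_comm_snoc mat_holomorphic_on_comm
      mat_holomorphic_on_funpow_mderiv)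

lemma mderiv_nested_comm:
  assumes S: "open S" and q: "q mat_holomorphic_on S" and Z: "Z mat_holomorphic_on S"
  shows "\<forall>l\<in>set ls. 1 \<le> l \<Longrightarrow> t \<in> S \<Longrightarrow>
    mderiv (nested_comm q Z ls) t
      = nested_comm q (mderiv Z) ls t + (\<Sum>i<length ls. nested_comm q Z (ls[i := ls ! i + 1]) t)"
proof (induction ls arbitrary: t rule: rev_induct)
  case (snoc l ls)
  then have IH: "mderiv (nested_comm q Z ls) t
      = nested_comm q (mderiv Z) ls t + (\<Sum>i<length ls. nested_comm q Z (ls[i := ls ! i + 1]) t)"
    by simp
  from snoc.prems have "mderiv ((mderiv ^^ (l - 1)) q) t = (mderiv ^^ (l + 1 - 1)) q t"
    by (cases l) auto
  then have "mderiv (nested_comm q Z (ls @ [l])) t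
      = comm (mderiv (nested_comm q Z ls) t) ((mderiv ^^ (l - 1)) q t)
        + comm (nested_comm q Z ls t) ((mderiv ^^ (l + 1 - 1)) q t)"
    unfolding nested_comm_snoc
    by (simp add: mderiv_comm[OF S nested_comm_holomorphic[OF S q Z]
          mat_holomorphic_on_funpow_mderiv[OF S q] snoc.prems(2)])
  also have "\<dots> = nested_comm q (mderiv Z) (ls @ [l]) t
      + ((\<Sum>i<length ls. nested_comm q Z (ls[i := ls ! i + 1] @ [l]) t) + nested_comm q Z (ls @ [l + 1]) t)"
    unfolding IH comm_add_left comm_sum_left by (simp add: nested_comm_snoc)
  also have "(\<Sum>i<length ls. nested_comm q Z (ls[i := ls ! i + 1] @ [l]) t) + nested_comm q Z (ls @ [l + 1]) t
      = (\<Sum>i<length (ls @ [l]). nested_comm q Z ((ls @ [l])[i := (ls @ [l]) ! i + 1]) t)"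
    by (simp add: nth_append list_update_append)
  finally show ?case .
qed (simp add: nested_comm_Nil)

context
  fixes S :: "complex set" and B X :: "complex \<Rightarrow> 'd::finite op3"
  assumes S: "open S"
    and B_hol: "B mat_holomorphic_on S"
    and B_inv_hol: "(\<lambda>t. matrix_inv (B t)) mat_holomorphic_on S"
    and B_inv: "\<And>t. t \<in> S \<Longrightarrow> invertible (B t)"
    and X_hol: "X mat_holomorphic_on S"
begin

definition conj_deriv :: "nat \<Rightarrow> complex \<Rightarrow> 'd op3" where
  "conj_deriv j t = matrix_inv (B t) ** (mderiv ^^ j) X t ** B t"

lemma conj_deriv_holomorphic: "conj_deriv j mat_holomorphic_on S"
  unfolding conj_deriv_def[abs_def]
  by (intro mat_holomorphic_on_mult B_hol B_inv_hol mat_holomorphic_on_funpow_mderiv[OF S X_hol])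

lemma mderiv_conj_deriv:
  assumes t: "t \<in> S"
  shows "mderiv (conj_deriv j) t = conj_deriv (Suc j) t + comm (conj_deriv j t) (mat_logderiv B t)"
proof -
  have Xj: "(mderiv ^^ j) X mat_holomorphic_on S"
    by (rule mat_holomorphic_on_funpow_mderiv[OF S X_hol])
  have cancel: "M ** B t ** matrix_inv (B t) = M" for M :: "'d op3"
    by (simp add: matrix_mul_assoc[symmetric] matrix_inv_right B_inv t)
  have "mderiv (conj_deriv j) t
      = (mderiv (\<lambda>t. matrix_inv (B t)) t ** (mderiv ^^ j) X t
          + matrix_inv (B t) ** mderiv ((mderiv ^^ j) X) t) ** B t
        + matrix_inv (B t) ** (mderiv ^^ j) X t ** mderiv B t"
    unfolding conj_deriv_def[abs_def]
    by (simp add: mderiv_mult[OF S mat_holomorphic_on_mult[OF B_inv_hol Xj] B_hol t]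
        mderiv_mult[OF S B_inv_hol Xj t])
  also have "\<dots> = conj_deriv (Suc j) t + comm (conj_deriv j t) (mat_logderiv B t)"
    unfolding conj_deriv_def comm_def mat_logderiv_def
    by (simp add: mderiv_matrix_inv[OF S t B_hol B_inv_hol B_inv] matrix_add_rdistrib matrix_neg_left
        matrix_diff_rdistrib matrix_add_ldistrib matrix_mul_assoc cancel)
  finally show ?thesis .
qed

definition comm_term :: "nat list \<Rightarrow> complex \<Rightarrow> 'd op3" where
  "comm_term ls = nested_comm (mat_logderiv B) (conj_deriv (last ls - 1)) (butlast ls)"

lemma comm_term_holomorphic: "comm_term ls mat_holomorphic_on S"
  unfolding comm_term_def
  by (intro nested_comm_holomorphic S conj_deriv_holomorphic mat_logderiv_holomorphic B_hol B_inv_hol)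

lemma comm_term_snoc: "comm_term (ls @ [l]) = nested_comm (mat_logderiv B) (conj_deriv (l - 1)) ls"
  unfolding comm_term_def by simp

lemma mderiv_comm_term:
  assumes "ls \<noteq> []" "\<forall>l\<in>set ls. 1 \<le> l" and t: "t \<in> S"
  shows "mderiv (comm_term ls) t = (\<Sum>i<length ls. comm_term (ls[i := ls ! i + 1]) t) + comm_term (1 # ls) t"
proof -
  obtain ls' l where ls: "ls = ls' @ [l]"
    using assms(1) by (metis append_butlast_last_id)
  with assms(2) have l: "1 \<le> l" and ls': "\<forall>l\<in>set ls'. 1 \<le> l"
    by auto
  have q: "mat_logderiv B mat_holomorphic_on S"
    by (rule mat_logderiv_holomorphic[OF S B_hol B_inv_hol])
  have "mderiv (comm_term ls) t
      = nested_comm (mat_logderiv B) (mderiv (conj_deriv (l - 1))) ls' t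
        + (\<Sum>i<length ls'. comm_term (ls'[i := ls' ! i + 1] @ [l]) t)"
    unfolding ls comm_term_snoc
    by (rule mderiv_nested_comm[OF S q conj_deriv_holomorphic ls' t])
  also have "nested_comm (mat_logderiv B) (mderiv (conj_deriv (l - 1))) ls' t
      = nested_comm (mat_logderiv B) (\<lambda>t. conj_deriv l t + comm (conj_deriv (l - 1) t) (mat_logderiv B t)) ls' t"
    unfolding nested_comm_def using mderiv_conj_deriv[OF t, of "l - 1"] l by simp
  also have "\<dots> = comm_term (ls' @ [l + 1]) t + comm_term ((1 # ls') @ [l]) t"
    unfolding nested_comm_add comm_term_snoc by (simp add: nested_comm_Cons)
  finally show ?thesis
    unfolding ls by (simp add: nth_append list_update_append algebra_simps)
qed

definition comm_expansion :: "nat \<Rightarrow> complex \<Rightarrow> 'd op3" where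
  "comm_expansion N t = (\<Sum>ls\<in>all_compositions N. real (ccoef ls) *\<^sub>R comm_term ls t)"

lemma funpow_mderiv_conj_deriv_0:
  "t \<in> S \<Longrightarrow> (mderiv ^^ m) (conj_deriv 0) t = comm_expansion (Suc m) t"
proof (induction m arbitrary: t)
  case 0
  have "ccoef [1] = 1"
    by (simp add: ccoef_def)
  then show ?case
    by (simp add: comm_expansion_def all_compositions_1[unfolded One_nat_def] comm_term_def nested_comm_Nil)
next
  case (Suc m)
  have "(mderiv ^^ Suc m) (conj_deriv 0) t = mderiv (comm_expansion (Suc m)) t"
    using Suc by (simp add: mderiv_cong[OF S, of "(mderiv ^^ m) (conj_deriv 0)"])
  also have "\<dots> = (\<Sum>ls\<in>all_compositions (Suc m). real (ccoef ls) *\<^sub>R mderiv (comm_term ls) t)"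
    unfolding comm_expansion_def[abs_def]
    by (simp add: mderiv_sum[OF S _ Suc.prems] mat_holomorphic_on_scaleR comm_term_holomorphic
        mderiv_scaleR[OF S comm_term_holomorphic Suc.prems])
  also have "\<dots> = (\<Sum>ls\<in>all_compositions (Suc m). real (ccoef ls) *\<^sub>R
      ((\<Sum>i<length ls. comm_term (ls[i := ls ! i + 1]) t) + comm_term (1 # ls) t))"
  proof (rule sum.cong[OF refl])
    fix ls assume "ls \<in> all_compositions (Suc m)"
    then have "ls \<noteq> []" "\<forall>l\<in>set ls. 1 \<le> l"
      by (auto simp: all_compositions_def)
    then show "real (ccoef ls) *\<^sub>R mderiv (comm_term ls) t
        = real (ccoef ls) *\<^sub>R ((\<Sum>i<length ls. comm_term (ls[i := ls ! i + 1]) t) + comm_term (1 # ls) t)"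
      by (simp add: mderiv_comm_term Suc.prems)
  qed
  also have "\<dots> = comm_expansion (Suc (Suc m)) t"
    unfolding comm_expansion_def by (rule ccoef_sum_step)
  finally show ?case .
qed

lemma comm_expansion_split:
  assumes "2 \<le> k"
  shows "comm_expansion (k - 1) t = matrix_inv (B t) ** (mderiv ^^ (k - 2)) X t ** B t
    + (\<Sum>n = 2..k - 1. \<Sum>ls \<in> compositions (k - 1) n. real (ccoef ls) *\<^sub>R
         foldl (\<lambda>Y l. comm Y ((mderiv ^^ (l + 1 - 2)) (mat_logderiv B) t))
           (matrix_inv (B t) ** (mderiv ^^ (ls ! (n - 1) + 1 - 2)) X t ** B t) (take (n - 1) ls))"
proof -
  have "all_compositions (k - 1) = (\<Union>n\<in>{1..k - 1}. compositions (k - 1) n)"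
    using assms by (intro all_compositions_eq_UN) simp
  then have "comm_expansion (k - 1) t
      = (\<Sum>n\<in>{1..k - 1}. \<Sum>ls\<in>compositions (k - 1) n. real (ccoef ls) *\<^sub>R comm_term ls t)"
    unfolding comm_expansion_def
    by (simp only:) (rule sum.UNION_disjoint[OF _ ballI[OF finite_compositions]];
        auto simp: compositions_def)
  also have "\<dots> = (\<Sum>ls\<in>compositions (k - 1) 1. real (ccoef ls) *\<^sub>R comm_term ls t)
      + (\<Sum>n = 2..k - 1. \<Sum>ls\<in>compositions (k - 1) n. real (ccoef ls) *\<^sub>R comm_term ls t)"
    using assms by (simp add: sum.atLeast_Suc_atMost numeral_2_eq_2)
  also have "(\<Sum>ls\<in>compositions (k - 1) 1. real (ccoef ls) *\<^sub>R comm_term ls t)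
      = matrix_inv (B t) ** (mderiv ^^ (k - 2)) X t ** B t"
  proof -
    have "compositions (k - 1) 1 = {[k - 1]}"
      using assms by (intro compositions_1) simp
    with assms show ?thesis
      by (simp add: ccoef_def comm_term_def nested_comm_Nil conj_deriv_def numeral_2_eq_2)
  qed
  also have "(\<Sum>n = 2..k - 1. \<Sum>ls\<in>compositions (k - 1) n. real (ccoef ls) *\<^sub>R comm_term ls t)
      = (\<Sum>n = 2..k - 1. \<Sum>ls \<in> compositions (k - 1) n. real (ccoef ls) *\<^sub>R
         foldl (\<lambda>Y l. comm Y ((mderiv ^^ (l + 1 - 2)) (mat_logderiv B) t))
           (matrix_inv (B t) ** (mderiv ^^ (ls ! (n - 1) + 1 - 2)) X t ** B t) (take (n - 1) ls))"
  proof (intro sum.cong refl)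
    fix n ls assume "n \<in> {2..k - 1}" "ls \<in> compositions (k - 1) n"
    then have "length ls = n" "ls \<noteq> []"
      by (auto simp: compositions_def)
    then have "last ls = ls ! (n - 1)" "butlast ls = take (n - 1) ls"
      by (simp_all add: last_conv_nth butlast_conv_take)
    then show "real (ccoef ls) *\<^sub>R comm_term ls t
        = real (ccoef ls) *\<^sub>R foldl (\<lambda>Y l. comm Y ((mderiv ^^ (l + 1 - 2)) (mat_logderiv B) t))
            (matrix_inv (B t) ** (mderiv ^^ (ls ! (n - 1) + 1 - 2)) X t ** B t) (take (n - 1) ls)"
      by (simp add: comm_term_def nested_comm_def conj_deriv_def numeral_2_eq_2)
  qed
  finally show ?thesis .
qed

lemma funpow_mderiv_conjugate:
  assumes "t \<in> S" "2 \<le> k"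
  shows "(mderiv ^^ (k - 2)) (\<lambda>t. matrix_inv (B t) ** X t ** B t) t
    = matrix_inv (B t) ** (mderiv ^^ (k - 2)) X t ** B t
      + (\<Sum>n = 2..k - 1. \<Sum>ls \<in> compositions (k - 1) n. real (ccoef ls) *\<^sub>R
         foldl (\<lambda>Y l. comm Y ((mderiv ^^ (l + 1 - 2)) (mat_logderiv B) t))
           (matrix_inv (B t) ** (mderiv ^^ (ls ! (n - 1) + 1 - 2)) X t ** B t) (take (n - 1) ls))"
proof -
  have "(\<lambda>t. matrix_inv (B t) ** X t ** B t) = conj_deriv 0"
    by (simp add: conj_deriv_def fun_eq_iff)
  moreover have "Suc (k - 2) = k - 1"
    using assms(2) by simp
  ultimately show ?thesis
    using funpow_mderiv_conj_deriv_0[OF assms(1), of "k - 2"] comm_expansion_split[OF assms(2)]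
    by simp
qed

end

lemma funpow_mderiv_mat_logderiv_mult:
  assumes S: "open S" "t \<in> S"
    and A: "A mat_holomorphic_on S" "(\<lambda>t. matrix_inv (A t)) mat_holomorphic_on S"
      "\<And>t. t \<in> S \<Longrightarrow> invertible (A t)"
    and B: "B mat_holomorphic_on S" "(\<lambda>t. matrix_inv (B t)) mat_holomorphic_on S"
      "\<And>t. t \<in> S \<Longrightarrow> invertible (B t)"
    and k: "2 \<le> k"
  shows "(mderiv ^^ (k - 2)) (mat_logderiv (\<lambda>t. A t ** B t)) t
    = (mderiv ^^ (k - 2)) (mat_logderiv B) t
      + matrix_inv (B t) ** (mderiv ^^ (k - 2)) (mat_logderiv A) t ** B t
      + (\<Sum>n = 2..k - 1. \<Sum>ls \<in> compositions (k - 1) n. real (ccoef ls) *\<^sub>R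
         foldl (\<lambda>Y l. comm Y ((mderiv ^^ (l + 1 - 2)) (mat_logderiv B) t))
           (matrix_inv (B t) ** (mderiv ^^ (ls ! (n - 1) + 1 - 2)) (mat_logderiv A) t ** B t)
           (take (n - 1) ls))"
proof -
  have hol: "mat_logderiv A mat_holomorphic_on S" "mat_logderiv B mat_holomorphic_on S"
    using mat_logderiv_holomorphic S(1) A B by blast+
  have "(mderiv ^^ (k - 2)) (mat_logderiv (\<lambda>t. A t ** B t)) t
      = (mderiv ^^ (k - 2)) (\<lambda>t. mat_logderiv B t + matrix_inv (B t) ** mat_logderiv A t ** B t) t"
    by (rule funpow_mderiv_cong[OF S(1) _ S(2)])
      (simp add: mat_logderiv_mult[OF S(1) _ A(1) B(1)] A(3) B(3))
  also have "\<dots> = (mderiv ^^ (k - 2)) (mat_logderiv B) t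
      + (mderiv ^^ (k - 2)) (\<lambda>t. matrix_inv (B t) ** mat_logderiv A t ** B t) t"
    by (intro funpow_mderiv_add[OF S(1) _ _ S(2)] hol mat_holomorphic_on_mult B)
  finally show ?thesis
    using funpow_mderiv_conjugate[OF S(1) B hol(1) S(2) k] by (simp add: add.assoc)
qed

section \<open>Charges of a unitary analytic R-matrix\<close>

lemma holomorphic_on_translate:
  assumes "g holomorphic_on ball 0 r"
  shows "(\<lambda>s. g (x + s)) holomorphic_on ball 0 (r - norm x)"
proof -
  have "\<forall>s\<in>ball 0 (r - norm x). x + s \<in> ball 0 r"
    by (auto intro: norm_triangle_lt)
  then have "(\<lambda>s. x + s) ` ball 0 (r - norm x) \<subseteq> ball 0 r"
    by (simp only: image_subset_iff)
  then have "(g \<circ> (\<lambda>s. x + s)) holomorphic_on ball 0 (r - norm x)"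
    by (intro holomorphic_on_compose_gen[OF _ assms] holomorphic_intros)
  then show ?thesis by (simp add: o_def)
qed

lemma shifted_entry_holomorphic:
  fixes R :: "complex \<Rightarrow> complex \<Rightarrow> 'd::finite op2"
  assumes hol_fst: "\<And>b p q. norm b < r \<Longrightarrow> (\<lambda>a. R a b $ p $ q) holomorphic_on ball 0 r"
    and hol_snd: "\<And>a p q. norm a < r \<Longrightarrow> (\<lambda>b. R a b $ p $ q) holomorphic_on ball 0 r"
    and "i \<noteq> j" "m \<in> {i, j}" "norm (u i) < r" "norm (u j) < r"
  shows "(\<lambda>s. R (shiftI [m] u s i) (shiftI [m] u s j) $ p $ q) holomorphic_on ball 0 (r - norm (u m))"
proof -
  from assms(4) consider "m = i" | "m = j"
    by blast
  then show ?thesis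
  proof cases
    case 1
    with assms(3) show ?thesis
      using holomorphic_on_translate[OF hol_fst[OF assms(6)]] by (simp add: shiftI_def)
  next
    case 2
    with assms(3) show ?thesis
      using holomorphic_on_translate[OF hol_snd[OF assms(5)]] by (simp add: shiftI_def)
  qed
qed

lemma mat_holomorphic_on_Rslot:
  "(\<And>p q. (\<lambda>s. R (w s i) (w s j) $ p $ q) holomorphic_on S) \<Longrightarrow> (\<lambda>s. Rslot R i j (w s)) mat_holomorphic_on S"
  unfolding mat_holomorphic_on_def Rslot_def by (auto intro!: holomorphic_intros)

lemma shifted_Rslot_holomorphic_invertible:
  fixes R :: "complex \<Rightarrow> complex \<Rightarrow> 'd::finite op2"
  assumes hol_fst: "\<And>b p q. norm b < r \<Longrightarrow> (\<lambda>a. R a b $ p $ q) holomorphic_on ball 0 r"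
    and hol_snd: "\<And>a p q. norm a < r \<Longrightarrow> (\<lambda>b. R a b $ p $ q) holomorphic_on ball 0 r"
    and unitary: "\<And>a b. norm a < r \<Longrightarrow> norm b < r \<Longrightarrow> R a b ** swap21 (R b a) = mat 1"
    and ij: "(i, j) \<in> {(1,2), (1,3), (2,3)}" and m: "m \<in> {i, j}"
    and u: "norm (u i) < r" "norm (u j) < r"
  defines "F \<equiv> \<lambda>s. Rslot R i j (shiftI [m] u s)"
  shows "F mat_holomorphic_on ball 0 (r - norm (u m))"
    and "(\<lambda>s. matrix_inv (F s)) mat_holomorphic_on ball 0 (r - norm (u m))"
    and "\<And>s. s \<in> ball 0 (r - norm (u m)) \<Longrightarrow> invertible (F s)"
proof -
  define R' where "R' a b = swap21 (R b a)" for a b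
  have ij': "i \<noteq> j" "j \<noteq> i" "m \<in> {j, i}" "i \<in> {1,2,3}" "j \<in> {1,2,3}"
    using ij m by auto
  show hol: "F mat_holomorphic_on ball 0 (r - norm (u m))"
    unfolding F_def
    by (intro mat_holomorphic_on_Rslot shifted_entry_holomorphic[OF hol_fst hol_snd ij'(1) m u])
  have hol': "(\<lambda>s. Rslot R' i j (shiftI [m] u s)) mat_holomorphic_on ball 0 (r - norm (u m))"
  proof (rule mat_holomorphic_on_Rslot)
    fix p q :: "'d \<times> 'd"
    show "(\<lambda>s. R' (shiftI [m] u s i) (shiftI [m] u s j) $ p $ q) holomorphic_on ball 0 (r - norm (u m))"
      unfolding R'_def swap21_def vec_lambda_beta
      by (rule shifted_entry_holomorphic[OF hol_fst hol_snd ij'(2,3) u(2,1)])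
  qed
  have right_inverse: "F s ** Rslot R' i j (shiftI [m] u s) = mat 1" if "s \<in> ball 0 (r - norm (u m))" for s
  proof -
    have "norm (shiftI [m] u s i) < r" "norm (shiftI [m] u s j) < r"
      using that u m norm_triangle_lt[of "u m" s r] by (auto simp: shiftI_def)
    then have "Rslot (\<lambda>a b. R a b ** R' a b) i j (shiftI [m] u s) = Rslot (\<lambda>a b. mat 1) i j (shiftI [m] u s)"
      unfolding R'_def by (intro Rslot_cong unitary)
    also have "\<dots> = mat 1"
      by (rule Rslot_mat_1[OF ij'(4,5,1)])
    finally show ?thesis
      unfolding F_def Rslot_mult[OF ij] .
  qed
  show "\<And>s. s \<in> ball 0 (r - norm (u m)) \<Longrightarrow> invertible (F s)"
    using right_inverse invertible_if_right_inverse by blast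
  show "(\<lambda>s. matrix_inv (F s)) mat_holomorphic_on ball 0 (r - norm (u m))"
    using hol' by (subst mat_holomorphic_on_cong[where G = "\<lambda>s. Rslot R' i j (shiftI [m] u s)"])
      (simp_all add: right_inverse matrix_inv_eq_right_inverse)
qed

lemma shiftI_0: "shiftI I u 0 = u"
  by (simp add: shiftI_def fun_eq_iff)

lemma Qk_eq_funpow_mat_logderiv:
  "Qk R k I J u = (mderiv ^^ (k - 2)) (mat_logderiv (\<lambda>s. RIJ R I J (shiftI I u s))) 0"
  unfolding Qk_def Let_def mat_logderiv_def[abs_def] ..

lemma Qtk_eq_funpow_mat_logderiv:
  "Qtk R k I J u = - (mderiv ^^ (k - 2)) (mat_logderiv (\<lambda>s. RIJ R I J (shiftI J u s))) 0"
  unfolding Qtk_def Let_def mat_logderiv_def[abs_def] ..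

lemma foldl_comm_neg:
  "foldl (\<lambda>X l. comm (- f l) X) (- Z) ls = - foldl (\<lambda>X l. comm X (f l)) Z ls"
  by (induction ls arbitrary: Z) (simp_all add: comm_neg_neg)

context
  fixes R :: "complex \<Rightarrow> complex \<Rightarrow> 'd::finite op2" and r :: real and u :: "nat \<Rightarrow> complex"
  assumes hol_fst: "\<And>b p q. norm b < r \<Longrightarrow> (\<lambda>a. R a b $ p $ q) holomorphic_on ball 0 r"
    and hol_snd: "\<And>a p q. norm a < r \<Longrightarrow> (\<lambda>b. R a b $ p $ q) holomorphic_on ball 0 r"
    and unitary: "\<And>a b. norm a < r \<Longrightarrow> norm b < r \<Longrightarrow> R a b ** swap21 (R b a) = mat 1"
    and u: "norm (u 1) < r" "norm (u 2) < r" "norm (u 3) < r"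
begin

lemma Qk_1_23_expansion:
  assumes k: "2 \<le> k"
  shows "Qk R k [1] [2,3] u =
      Qk R k [1] [2] u
      + matrix_inv (RIJ R [1] [2] u) ** Qk R k [1] [3] u ** RIJ R [1] [2] u
      + (\<Sum>n = 2..k - 1. \<Sum>ls \<in> compositions (k - 1) n.
           real (ccoef ls) *\<^sub>R
             foldl (\<lambda>X l. comm X (Qk R (l + 1) [1] [2] u))
               (matrix_inv (RIJ R [1] [2] u) ** Qk R (ls ! (n - 1) + 1) [1] [3] u ** RIJ R [1] [2] u)
               (take (n - 1) ls))"
proof -
  have RIJ: "RIJ R [1] [2,3] w = Rslot R 1 3 w ** Rslot R 1 2 w"
    "RIJ R [1] [2] w = Rslot R 1 2 w" "RIJ R [1] [3] w = Rslot R 1 3 w" for w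
    by (simp_all add: RIJ_def)
  have "0 \<in> ball 0 (r - norm (u 1))"
    using u by simp
  from funpow_mderiv_mat_logderiv_mult[OF open_ball this
      shifted_Rslot_holomorphic_invertible[OF hol_fst hol_snd unitary, of 1 3 1 u]
      shifted_Rslot_holomorphic_invertible[OF hol_fst hol_snd unitary, of 1 2 1 u] k]
  show ?thesis
    using u unfolding Qk_eq_funpow_mat_logderiv RIJ shiftI_0 by simp
qed

lemma Qtk_12_3_expansion:
  assumes k: "2 \<le> k"
  shows "Qtk R k [1,2] [3] u =
      Qtk R k [2] [3] u
      + matrix_inv (RIJ R [2] [3] u) ** Qtk R k [1] [3] u ** RIJ R [2] [3] u
      + (\<Sum>n = 2..k - 1. \<Sum>ls \<in> compositions (k - 1) n.
           real (ccoef ls) *\<^sub>R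
             foldl (\<lambda>X l. comm (Qtk R (l + 1) [2] [3] u) X)
               (matrix_inv (RIJ R [2] [3] u) ** Qtk R (ls ! (n - 1) + 1) [1] [3] u ** RIJ R [2] [3] u)
               (take (n - 1) ls))"
proof -
  have RIJ: "RIJ R [1,2] [3] w = Rslot R 1 3 w ** Rslot R 2 3 w"
    "RIJ R [2] [3] w = Rslot R 2 3 w" "RIJ R [1] [3] w = Rslot R 1 3 w" for w
    by (simp_all add: RIJ_def)
  have "0 \<in> ball 0 (r - norm (u 3))"
    using u by simp
  from funpow_mderiv_mat_logderiv_mult[OF open_ball this
      shifted_Rslot_holomorphic_invertible[OF hol_fst hol_snd unitary, of 1 3 3 u]
      shifted_Rslot_holomorphic_invertible[OF hol_fst hol_snd unitary, of 2 3 3 u] k]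
  \<comment> \<open>the sign of \<open>Qtk\<close> reverses the commutators: \<open>comm (- a) (- b) = - comm b a\<close>\<close>
  show ?thesis
    using u unfolding Qtk_eq_funpow_mat_logderiv RIJ shiftI_0
    by (simp add: matrix_neg_left matrix_neg_right foldl_comm_neg sum_negf)
qed

end

theorem mainTheorem1:
  fixes R :: "complex \<Rightarrow> complex \<Rightarrow> 'd::finite op2"
    and c :: "nat \<Rightarrow> nat \<Rightarrow> 'd op2"
    and r :: real and k :: nat and u :: "nat \<Rightarrow> complex"
  assumes r_pos: "r > 0"
    and analytic: "\<And>a b i j. norm a < r \<Longrightarrow> norm b < r \<Longrightarrow>
        ((\<lambda>(m, n). c m n $ i $ j * a ^ m * b ^ n) has_sum (R a b $ i $ j)) UNIV"
    and YBE: "\<And>w. norm (w 1) < r \<Longrightarrow> norm (w 2) < r \<Longrightarrow> norm (w 3) < r \<Longrightarrow>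
        Rslot R 1 2 w ** Rslot R 1 3 w ** Rslot R 2 3 w =
        Rslot R 2 3 w ** Rslot R 1 3 w ** Rslot R 1 2 w"
    and regular: "\<And>a. norm a < r \<Longrightarrow> R a a = flipP"
    and unitary: "\<And>a b. norm a < r \<Longrightarrow> norm b < r \<Longrightarrow> R a b ** swap21 (R b a) = mat 1"
    and k2: "k \<ge> 2"
    and u_in: "norm (u 1) < r" "norm (u 2) < r" "norm (u 3) < r"
  shows
   "Qk R k [1] [2,3] u =
      Qk R k [1] [2] u
      + matrix_inv (RIJ R [1] [2] u) ** Qk R k [1] [3] u ** RIJ R [1] [2] u
      + (\<Sum>n = 2..k - 1. \<Sum>ls \<in> compositions (k - 1) n.
           real (ccoef ls) *\<^sub>R
             foldl (\<lambda>X l. comm X (Qk R (l + 1) [1] [2] u))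
               (matrix_inv (RIJ R [1] [2] u) ** Qk R (ls ! (n - 1) + 1) [1] [3] u ** RIJ R [1] [2] u)
               (take (n - 1) ls))
    \<and>
    Qtk R k [1,2] [3] u =
      Qtk R k [2] [3] u
      + matrix_inv (RIJ R [2] [3] u) ** Qtk R k [1] [3] u ** RIJ R [2] [3] u
      + (\<Sum>n = 2..k - 1. \<Sum>ls \<in> compositions (k - 1) n.
           real (ccoef ls) *\<^sub>R
             foldl (\<lambda>X l. comm (Qtk R (l + 1) [2] [3] u) X)
               (matrix_inv (RIJ R [2] [3] u) ** Qtk R (ls ! (n - 1) + 1) [1] [3] u ** RIJ R [2] [3] u)
               (take (n - 1) ls))"
proof -
  have hol_fst: "(\<lambda>a. R a b $ p $ q) holomorphic_on ball 0 r" if "norm b < r" for b p q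
    using analytic that by (rule double_power_series_holomorphic_fst)
  have hol_snd: "(\<lambda>b. R a b $ p $ q) holomorphic_on ball 0 r" if "norm a < r" for a p q
    using analytic that by (rule double_power_series_holomorphic_snd)
  show ?thesis
    using Qk_1_23_expansion[OF hol_fst hol_snd unitary u_in k2]
      Qtk_12_3_expansion[OF hol_fst hol_snd unitary u_in k2]
    by blast
qed

end
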